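(* Let $G$ be a maximal outerplanar graph with at least four vertices. Let $uv$ be an edge on its outer face with $\deg_G(u)>2$ and $\deg_G(v)>2$, let $w=\Delta(uv)$, and let $G_u=G_u(uv)$ and $G_v=G_v(uv)$ be the $uv$-segments. If $\mathrm{mvc}(G)=\mathrm{mvc}(G_u)+\mathrm{mvc}(G_v)-1$, then $$\mathrm{mvc}_u(G)=\mathrm{mvc}_{uw}(G_u)+\mathrm{mvc}(G_v)-1,\quad \mathrm{mvc}_v(G)=\mathrm{mvc}(G_u)+\mathrm{mvc}_{vw}(G_v)-1,$$ $$\mathrm{mvc}_{uv}(G)=\mathrm{mvc}_{uw}(G_u)+\mathrm{mvc}_{vw}(G_v)-1.$$
   Context: All graphs are finite and simple. A maximal outerplanar graph is an outerplanar graph to which no edge between existing vertices can be added while keeping it outerplanar. A fixed outerplanar embedding, with all vertices on the outer face, is assumed. For $S\subseteq V(G)$, $\mathrm{mvc}_S(G)$ is the minimum size of a vertex cover of $G$ containing $S$, and $\mathrm{mvc}(G)=\mathrm{mvc}_\emptyset(G)$. Braces are dropped for small sets, e.g. $\mathrm{mvc}_{uw}(G)=\mathrm{mvc}_{\{u,w\}}(G)$. For an edge $uv$ on the outer face of a maximal outerplanar graph with at least three vertices, $\Delta(uv)$ is the unique common neighbor of $u$ and $v$. $uv$-segments: let $w=\Delta(uv)$. $G_u(uv)$ is the maximal biconnected outerplanar subgraph of $G$ that has $uw$ on its outer face and does not contain $v$. Equivalently, it is the subgraph induced by $u$, $w$ and the vertices on the side of edge $uw$ not containing $v$; it is the single edge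 $uw$ if $\deg_G(u)=2$. $G_v(uv)$ is defined symmetrically. *)

theory Defs
  imports Main
begin

definition graph :: "'a set \<Rightarrow> 'a set set \<Rightarrow> bool" where
  "graph V E \<longleftrightarrow> finite V \<and> (\<forall>e\<in>E. \<exists>x y. x \<noteq> y \<and> e = {x, y} \<and> x \<in> V \<and> y \<in> V)"

definition deg :: "'a set \<Rightarrow> 'a set set \<Rightarrow> 'a \<Rightarrow> nat" where
  "deg V E x = card {y \<in> V. {x, y} \<in> E}"

text \<open>An outerplanar embedding: the vertices placed on a circle in the cyclic order
  f 0, f 1, ..., f (n-1), with edges drawn as non-crossing chords.\<close>
definition outer_embedding :: "'a set \<Rightarrow> 'a set set \<Rightarrow> (nat \<Rightarrow> 'a) \<Rightarrow> bool" where
  "outer_embedding V E f \<longleftrightarrow>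
     bij_betw f {..<card V} V \<and>
     (\<forall>a b c d. a < c \<and> c < b \<and> b < d \<and> d < card V \<and> {f a, f b} \<in> E \<longrightarrow> {f c, f d} \<notin> E)"

definition outerplanar :: "'a set \<Rightarrow> 'a set set \<Rightarrow> bool" where
  "outerplanar V E \<longleftrightarrow> graph V E \<and> (\<exists>f. outer_embedding V E f)"

definition maximal_outerplanar :: "'a set \<Rightarrow> 'a set set \<Rightarrow> bool" where
  "maximal_outerplanar V E \<longleftrightarrow> outerplanar V E \<and>
     (\<forall>x\<in>V. \<forall>y\<in>V. x \<noteq> y \<and> {x, y} \<notin> E \<longrightarrow> \<not> outerplanar V (insert {x, y} E))"

definition outer_edge :: "'a set \<Rightarrow> 'a set set \<Rightarrow> (nat \<Rightarrow> 'a) \<Rightarrow> 'a \<Rightarrow> 'a \<Rightarrow> bool" where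
  "outer_edge V E f u v \<longleftrightarrow> {u, v} \<in> E \<and>
     (\<exists>i < card V. {u, v} = {f i, f (Suc i mod card V)})"

definition Delta :: "'a set set \<Rightarrow> 'a \<Rightarrow> 'a \<Rightarrow> 'a" where
  "Delta E u v = (THE w. {u, w} \<in> E \<and> {v, w} \<in> E)"

definition pos :: "'a set \<Rightarrow> (nat \<Rightarrow> 'a) \<Rightarrow> 'a \<Rightarrow> nat" where
  "pos V f x = inv_into {..<card V} f x"

text \<open>Vertices met going forward (cyclically) from a to b, both included.\<close>
definition fwd_arc :: "'a set \<Rightarrow> (nat \<Rightarrow> 'a) \<Rightarrow> 'a \<Rightarrow> 'a \<Rightarrow> 'a set" where
  "fwd_arc V f a b =
     {f ((pos V f a + k) mod card V) | k. k \<le> (pos V f b + card V - pos V f a) mod card V}"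

definition arc_avoiding :: "'a set \<Rightarrow> (nat \<Rightarrow> 'a) \<Rightarrow> 'a \<Rightarrow> 'a \<Rightarrow> 'a \<Rightarrow> 'a set" where
  "arc_avoiding V f a b c = (if c \<notin> fwd_arc V f a b then fwd_arc V f a b else fwd_arc V f b a)"

definition induced_edges :: "'a set set \<Rightarrow> 'a set \<Rightarrow> 'a set set" where
  "induced_edges E S = {e \<in> E. e \<subseteq> S}"

text \<open>The uv-segment G_u(uv): vertex set and edge set (induced subgraph on u, w = Delta(uv)
  and the vertices on the side of uw not containing v).\<close>
definition seg_V :: "'a set \<Rightarrow> 'a set set \<Rightarrow> (nat \<Rightarrow> 'a) \<Rightarrow> 'a \<Rightarrow> 'a \<Rightarrow> 'a set" where
  "seg_V V E f u v = arc_avoiding V f u (Delta E u v) v"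

definition seg_E :: "'a set \<Rightarrow> 'a set set \<Rightarrow> (nat \<Rightarrow> 'a) \<Rightarrow> 'a \<Rightarrow> 'a \<Rightarrow> 'a set set" where
  "seg_E V E f u v = induced_edges E (seg_V V E f u v)"

definition vertex_cover :: "'a set \<Rightarrow> 'a set set \<Rightarrow> 'a set \<Rightarrow> bool" where
  "vertex_cover V E C \<longleftrightarrow> C \<subseteq> V \<and> (\<forall>e\<in>E. e \<inter> C \<noteq> {})"

definition mvc :: "'a set \<Rightarrow> 'a set set \<Rightarrow> 'a set \<Rightarrow> nat" where
  "mvc V E S = Min {card C | C. vertex_cover V E C \<and> S \<subseteq> C}"

end

theory Submission
  imports Defs
begin

text \<open>
  The outer edge uv spans a triangle uvw, and the chords uw and vw cut G into the segments
  G_u and G_v, which share only w; every edge other than uv lies in one of them.  Restricting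
  a cover of G to the two segments costs at most one extra vertex (w, if it is in the cover),
  and gluing covers of the segments that both contain w and contain u or v saves one.  If
  mvc(G) = mvc(G_u) + mvc(G_v) - 1, an optimal cover of G must therefore contain w, which
  forces mvc_w(G_u) = mvc(G_u) and mvc_w(G_v) = mvc(G_v); the three identities then follow
  by comparing the two bounds.  To find w, rotate the embedding so that v and u are the first
  and last vertex of the polygon: w is the last vertex adjacent to v, and no chord crosses vw.
\<close>

section \<open>Vertex covers\<close>

lemma graph_edge_subset: "graph V E \<Longrightarrow> e \<in> E \<Longrightarrow> e \<subseteq> V"
  by (auto simp: graph_def)

lemma graph_no_loop: "graph V E \<Longrightarrow> {x, x} \<notin> E"
  unfolding graph_def by (metis doubleton_eq_iff insert_absorb2)

lemma graph_induced_edges: "graph V E \<Longrightarrow> W \<subseteq> V \<Longrightarrow> graph W (induced_edges E W)"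
  unfolding graph_def induced_edges_def
  by (metis (no_types, lifting) finite_subset insert_subset mem_Collect_eq)

lemma vertex_cover_edge: "vertex_cover V E C \<Longrightarrow> {x, y} \<in> E \<Longrightarrow> x \<in> C \<or> y \<in> C"
  unfolding vertex_cover_def by auto

lemma vertex_cover_induced_edges:
  "vertex_cover V E C \<Longrightarrow> vertex_cover W (induced_edges E W) (C \<inter> W)"
  unfolding vertex_cover_def induced_edges_def by blast

lemma vertex_cover_induced_edgesD:
  "vertex_cover W (induced_edges E W) C \<Longrightarrow> e \<in> E \<Longrightarrow> e \<subseteq> W \<Longrightarrow> e \<inter> C \<noteq> {}"
  unfolding vertex_cover_def induced_edges_def by blast

lemma mvc_le_card:
  assumes "finite V" "vertex_cover V E C" "S \<subseteq> C"
  shows "mvc V E S \<le> card C"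
proof -
  have "{card C |C. vertex_cover V E C \<and> S \<subseteq> C} \<subseteq> {..card V}"
    using assms(1) by (auto simp: vertex_cover_def intro: card_mono)
  then have "finite {card C |C. vertex_cover V E C \<and> S \<subseteq> C}"
    using finite_subset by blast
  then show ?thesis
    unfolding mvc_def using assms by (intro Min_le) auto
qed

lemma mvc_attained:
  assumes "graph V E" "S \<subseteq> V"
  obtains C where "vertex_cover V E C" "S \<subseteq> C" "card C = mvc V E S"
proof -
  let ?sizes = "{card C |C. vertex_cover V E C \<and> S \<subseteq> C}"
  have "?sizes \<subseteq> {..card V}"
    using assms(1) by (auto simp: vertex_cover_def graph_def intro: card_mono)
  then have "finite ?sizes"
    using finite_subset by blast
  moreover have "vertex_cover V E V"
    using assms(1) unfolding vertex_cover_def graph_def by blast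
  then have "?sizes \<noteq> {}"
    using assms(2) by blast
  ultimately have "mvc V E S \<in> ?sizes"
    unfolding mvc_def by (rule Min_in)
  then show ?thesis
    using that by auto
qed

lemma mvc_mono:
  assumes "graph V E" "S \<subseteq> T" "T \<subseteq> V"
  shows "mvc V E S \<le> mvc V E T"
proof -
  obtain C where "vertex_cover V E C" "T \<subseteq> C" "card C = mvc V E T"
    using mvc_attained assms(1,3) by blast
  then show ?thesis
    using mvc_le_card[of V E C S] assms by (auto simp: graph_def)
qed

lemma mvc_edge_le_Suc:
  assumes "graph V E" "{x, y} \<in> E"
  shows "mvc V E {x, y} \<le> mvc V E {} + 1"
proof -
  obtain C where C: "vertex_cover V E C" "card C = mvc V E {}"
    using mvc_attained[OF assms(1)] by blast
  have "finite C"
    using C(1) assms(1) finite_subset unfolding vertex_cover_def graph_def by blast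
  moreover have "C \<union> {x, y} = insert x C \<or> C \<union> {x, y} = insert y C"
    using vertex_cover_edge[OF C(1) assms(2)] by auto
  ultimately have "card (C \<union> {x, y}) \<le> card C + 1"
    by (metis card_insert_le_m1 card_insert_if le_refl Suc_eq_plus1 le_SucI)
  moreover have "vertex_cover V E (C \<union> {x, y})"
    using C(1) graph_edge_subset[OF assms] unfolding vertex_cover_def by blast
  ultimately show ?thesis
    using mvc_le_card[of V E "C \<union> {x, y}" "{x, y}"] assms(1) C(2)
    by (auto simp: graph_def)
qed

section \<open>Covers of a graph separated at a triangle\<close>

locale triangle_separation =
  fixes V :: "'a set" and E :: "'a set set" and A B :: "'a set" and u v w :: 'a
  assumes graph: "graph V E"
    and A_subset: "A \<subseteq> V" and B_subset: "B \<subseteq> V"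
    and A_Int_B: "A \<inter> B = {w}"
    and u_in_A: "u \<in> A" and v_in_B: "v \<in> B"
    and triangle: "{u, w} \<in> E" "{v, w} \<in> E" "{u, v} \<in> E"
    and edge_split: "\<And>e. e \<in> E \<Longrightarrow> e \<subseteq> A \<or> e \<subseteq> B \<or> e = {u, v}"
begin

abbreviation mvc_A :: "'a set \<Rightarrow> nat" where "mvc_A S \<equiv> mvc A (induced_edges E A) S"
abbreviation mvc_B :: "'a set \<Rightarrow> nat" where "mvc_B S \<equiv> mvc B (induced_edges E B) S"

lemma graph_A: "graph A (induced_edges E A)"
  using graph_induced_edges[OF graph A_subset] .

lemma graph_B: "graph B (induced_edges E B)"
  using graph_induced_edges[OF graph B_subset] .

lemma w_in: "w \<in> A" "w \<in> B"
  using A_Int_B by auto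

lemma mvc_pieces_mono:
  "mvc_A {} \<le> mvc_A {w}" "mvc_A {w} \<le> mvc_A {u, w}"
  "mvc_B {} \<le> mvc_B {w}" "mvc_B {w} \<le> mvc_B {v, w}"
  using mvc_mono[OF graph_A] mvc_mono[OF graph_B] u_in_A v_in_B w_in by auto

lemma mvc_pieces_le_card:
  assumes C: "vertex_cover V E C" and SA: "SA \<subseteq> C \<inter> A" and SB: "SB \<subseteq> C \<inter> B"
  shows "mvc_A SA + mvc_B SB \<le> card C + (if w \<in> C then 1 else 0)"
proof -
  have fin: "finite C"
    using C graph finite_subset unfolding vertex_cover_def graph_def by blast
  have "mvc_A SA \<le> card (C \<inter> A)"
    using mvc_le_card[OF _ vertex_cover_induced_edges[OF C] SA] graph_A by (simp add: graph_def)
  moreover have "mvc_B SB \<le> card (C \<inter> B)"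
    using mvc_le_card[OF _ vertex_cover_induced_edges[OF C] SB] graph_B by (simp add: graph_def)
  moreover have "C \<inter> A \<inter> (C \<inter> B) = C \<inter> {w}"
    using A_Int_B by auto
  then have "card (C \<inter> A) + card (C \<inter> B) = card (C \<inter> A \<union> C \<inter> B) + card (C \<inter> {w})"
    using card_Un_Int[of "C \<inter> A" "C \<inter> B"] fin by simp
  moreover have "card (C \<inter> A \<union> C \<inter> B) \<le> card C"
    using fin by (intro card_mono) auto
  ultimately show ?thesis
    by auto
qed

lemma mvc_le_pieces:
  assumes SA: "SA \<subseteq> A" "w \<in> SA" and SB: "SB \<subseteq> B" "w \<in> SB"
    and uv: "u \<in> SA \<or> v \<in> SB" and S: "S \<subseteq> SA \<union> SB"
  shows "mvc V E S + 1 \<le> mvc_A SA + mvc_B SB"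
proof -
  obtain CA where CA: "vertex_cover A (induced_edges E A) CA" "SA \<subseteq> CA" "card CA = mvc_A SA"
    using mvc_attained[OF graph_A SA(1)] by blast
  obtain CB where CB: "vertex_cover B (induced_edges E B) CB" "SB \<subseteq> CB" "card CB = mvc_B SB"
    using mvc_attained[OF graph_B SB(1)] by blast
  have "e \<inter> (CA \<union> CB) \<noteq> {}" if e: "e \<in> E" for e
  proof -
    from edge_split[OF e] consider "e \<subseteq> A" | "e \<subseteq> B" | "e = {u, v}"
      by blast
    then show ?thesis
    proof cases
      case 1
      then show ?thesis
        using vertex_cover_induced_edgesD[OF CA(1) e] by blast
    next
      case 2
      then show ?thesis
        using vertex_cover_induced_edgesD[OF CB(1) e] by blast
    next
      case 3
      then show ?thesis
        using uv CA(2) CB(2) by blast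
    qed
  qed
  moreover have "CA \<union> CB \<subseteq> V"
    using CA(1) CB(1) A_subset B_subset unfolding vertex_cover_def by blast
  ultimately have cover: "vertex_cover V E (CA \<union> CB)"
    unfolding vertex_cover_def by blast
  have fin: "finite CA" "finite CB"
    using CA(1) CB(1) graph_A graph_B unfolding vertex_cover_def graph_def
    by (auto intro: finite_subset)
  have "w \<in> CA \<inter> CB"
    using SA(2) SB(2) CA(2) CB(2) by blast
  then have "1 \<le> card (CA \<inter> CB)"
    using fin by (auto simp: Suc_le_eq card_gt_0_iff)
  then have "card (CA \<union> CB) + 1 \<le> card CA + card CB"
    using card_Un_Int[OF fin] by linarith
  moreover have "mvc V E S \<le> card (CA \<union> CB)"
    using mvc_le_card[OF _ cover] S CA(2) CB(2) graph by (auto simp: graph_def)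
  ultimately show ?thesis
    using CA(3) CB(3) by linarith
qed

lemma mvc_pieces_le_card_notin:
  "vertex_cover V E C \<Longrightarrow> w \<notin> C \<Longrightarrow> mvc_A {} + mvc_B {} \<le> card C"
  using mvc_pieces_le_card[of C "{}" "{}"] by simp

lemma tight_cases:
  assumes tight: "mvc V E {} + 1 = mvc_A {} + mvc_B {}"
  shows "mvc_A {u, w} = mvc_A {} \<and> mvc_B {w} = mvc_B {} \<or>
         mvc_A {w} = mvc_A {} \<and> mvc_B {v, w} = mvc_B {}"
proof -
  obtain C where C: "vertex_cover V E C" "card C = mvc V E {}"
    using mvc_attained[OF graph] by blast
  have "w \<in> C"
    using mvc_pieces_le_card_notin[OF C(1)] C(2) tight by fastforce
  moreover have "u \<in> C \<or> v \<in> C"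
    using vertex_cover_edge[OF C(1) triangle(3)] .
  moreover note mvc_pieces_mono
  ultimately show ?thesis
    using mvc_pieces_le_card[OF C(1), of "{u, w}" "{w}"]
      mvc_pieces_le_card[OF C(1), of "{w}" "{v, w}"] C(2) tight u_in_A v_in_B w_in
    by auto
qed

lemma mvc_pieces_le_Suc:
  assumes tight: "mvc V E {} + 1 = mvc_A {} + mvc_B {}"
    and SA: "SA = {w} \<or> SA = {u, w}" and SB: "SB = {w} \<or> SB = {v, w}"
  shows "mvc_A SA + mvc_B SB \<le> mvc_A {} + mvc_B {} + 1"
proof -
  have "mvc_A {u, w} \<le> mvc_A {} + 1" "mvc_B {v, w} \<le> mvc_B {} + 1"
    using mvc_edge_le_Suc[OF graph_A] mvc_edge_le_Suc[OF graph_B] triangle u_in_A v_in_B w_in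
    unfolding induced_edges_def by auto
  then show ?thesis
    using tight_cases[OF tight] mvc_pieces_mono SA SB by auto
qed

lemma mvc_eq_pieces:
  assumes tight: "mvc V E {} + 1 = mvc_A {} + mvc_B {}"
    and SA: "SA = {w} \<or> SA = {u, w}" and SB: "SB = {w} \<or> SB = {v, w}"
    and uv: "u \<in> SA \<or> v \<in> SB"
  shows "mvc V E (SA \<union> SB - {w}) + 1 = mvc_A SA + mvc_B SB"
proof (rule antisym)
  have SA_A: "SA \<subseteq> A" "w \<in> SA" and SB_B: "SB \<subseteq> B" "w \<in> SB"
    using SA SB u_in_A v_in_B w_in by auto
  then show "mvc V E (SA \<union> SB - {w}) + 1 \<le> mvc_A SA + mvc_B SB"
    by (rule mvc_le_pieces[OF _ _ _ _ uv]) blast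
  have "SA \<union> SB - {w} \<subseteq> V"
    using SA_A SB_B A_subset B_subset by blast
  then obtain C where C: "vertex_cover V E C" "SA \<union> SB - {w} \<subseteq> C"
    "card C = mvc V E (SA \<union> SB - {w})"
    using mvc_attained[OF graph] by blast
  show "mvc_A SA + mvc_B SB \<le> mvc V E (SA \<union> SB - {w}) + 1"
  proof (cases "w \<in> C")
    case True
    then have "SA \<subseteq> C \<inter> A" "SB \<subseteq> C \<inter> B"
      using C(2) SA_A SB_B by auto
    then show ?thesis
      using mvc_pieces_le_card[OF C(1)] C(3) True by fastforce
  next
    case False
    then show ?thesis
      using mvc_pieces_le_card_notin[OF C(1)] mvc_pieces_le_Suc[OF tight SA SB] C(3) by linarith
  qed
qed

theorem mvc_containing_triangle_side:
  assumes tight: "mvc V E {} + 1 = mvc_A {} + mvc_B {}"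
  shows "mvc V E {u} + 1 = mvc_A {u, w} + mvc_B {}"
    and "mvc V E {v} + 1 = mvc_A {} + mvc_B {v, w}"
    and "mvc V E {u, v} + 1 = mvc_A {u, w} + mvc_B {v, w}"
proof -
  have w_free: "mvc_A {w} = mvc_A {}" "mvc_B {w} = mvc_B {}"
    using tight_cases[OF tight] mvc_pieces_mono by auto
  have "u \<noteq> w" "v \<noteq> w"
    using triangle graph_no_loop[OF graph] by auto
  then have "{u, w} \<union> {w} - {w} = {u}" "{w} \<union> {v, w} - {w} = {v}"
    "{u, w} \<union> {v, w} - {w} = {u, v}"
    by auto
  then show "mvc V E {u} + 1 = mvc_A {u, w} + mvc_B {}"
    and "mvc V E {v} + 1 = mvc_A {} + mvc_B {v, w}"
    and "mvc V E {u, v} + 1 = mvc_A {u, w} + mvc_B {v, w}"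
    using mvc_eq_pieces[OF tight, of "{u, w}" "{w}"] mvc_eq_pieces[OF tight, of "{w}" "{v, w}"]
      mvc_eq_pieces[OF tight, of "{u, w}" "{v, w}"] w_free
    by simp_all
qed

end

section \<open>Crossing-free chords on a polygon\<close>

definition crossing_free :: "nat \<Rightarrow> (nat \<Rightarrow> 'a) \<Rightarrow> 'a set set \<Rightarrow> bool" where
  "crossing_free n h E \<longleftrightarrow>
     (\<forall>a b c d. a < c \<and> c < b \<and> b < d \<and> d < n \<and> {h a, h b} \<in> E \<longrightarrow> {h c, h d} \<notin> E)"

lemma outer_embedding_iff_crossing_free:
  "outer_embedding V E f \<longleftrightarrow> bij_betw f {..<card V} V \<and> crossing_free (card V) f E"
  by (simp add: outer_embedding_def crossing_free_def)

lemma crossing_freeD: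
  "crossing_free n h E \<Longrightarrow> a < c \<Longrightarrow> c < b \<Longrightarrow> b < d \<Longrightarrow> d < n \<Longrightarrow> {h a, h b} \<in> E \<Longrightarrow>
    {h c, h d} \<notin> E"
  unfolding crossing_free_def by blast

lemma crossing_free_cong:
  assumes "\<And>k. k < n \<Longrightarrow> h k = h' k" "crossing_free n h E"
  shows "crossing_free n h' E"
  unfolding crossing_free_def
proof (intro allI impI)
  fix a b c d
  assume abcd: "a < c \<and> c < b \<and> b < d \<and> d < n \<and> {h' a, h' b} \<in> E"
  then have "h a = h' a" "h b = h' b" "h c = h' c" "h d = h' d"
    using assms(1) by auto
  then show "{h' c, h' d} \<notin> E"
    using crossing_freeD[OF assms(2), of a c b d] abcd by auto
qed

definition cyclic_shift :: "nat \<Rightarrow> nat \<Rightarrow> (nat \<Rightarrow> 'a) \<Rightarrow> nat \<Rightarrow> 'a" where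
  "cyclic_shift n s h k = h ((k + s) mod n)"

lemma crossing_free_cyclic_shift_Suc:
  assumes "crossing_free n h E"
  shows "crossing_free n (\<lambda>k. h (Suc k mod n)) E"
  unfolding crossing_free_def
proof (intro allI impI notI)
  fix a b c d
  assume abcd: "a < c \<and> c < b \<and> b < d \<and> d < n \<and> {h (Suc a mod n), h (Suc b mod n)} \<in> E"
    and cd: "{h (Suc c mod n), h (Suc d mod n)} \<in> E"
  have small: "Suc a mod n = Suc a" "Suc b mod n = Suc b" "Suc c mod n = Suc c"
    using abcd by auto
  show False
  proof (cases "Suc d < n")
    case True
    then show False
      using crossing_freeD[OF assms, of "Suc a" "Suc c" "Suc b" "Suc d"] abcd cd small by auto
  next
    case False
    \<comment> \<open>the chord to the last vertex wraps around to vertex 0 and crosses ab from the other side\<close>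
    then have "Suc d = n"
      using abcd by simp
    then have "Suc d mod n = 0"
      by simp
    then have "{h 0, h (Suc c)} \<in> E"
      using cd small by (simp add: insert_commute)
    then show False
      using crossing_freeD[OF assms, of 0 "Suc a" "Suc c" "Suc b"] abcd small by auto
  qed
qed

lemma crossing_free_cyclic_shift:
  assumes "crossing_free n h E"
  shows "crossing_free n (cyclic_shift n s h) E"
proof (induction s)
  case 0
  show ?case
    by (rule crossing_free_cong[OF _ assms]) (simp add: cyclic_shift_def)
next
  case (Suc s)
  show ?case
    by (rule crossing_free_cong[OF _ crossing_free_cyclic_shift_Suc[OF Suc]])
      (simp add: cyclic_shift_def mod_add_left_eq)
qed

lemma cyclic_offset_mod:
  fixes a b n s :: nat
  assumes "a < n" "b < n"
  shows "((b + s) mod n + n - (a + s) mod n) mod n = (b + n - a) mod n"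
proof -
  have le: "(a + s) mod n \<le> (b + s) mod n + n"
    using assms by (simp add: less_imp_le_nat trans_le_add2)
  have "int (((b + s) mod n + n - (a + s) mod n) mod n)
      = ((int b + int s) mod int n + int n - (int a + int s) mod int n) mod int n"
    by (simp only: zmod_int of_nat_diff[OF le] of_nat_add)
  also have "\<dots> = ((int b + int s) mod int n + (int n - (int a + int s))) mod int n"
    by (simp only: mod_diff_right_eq add_diff_eq)
  also have "\<dots> = (int b + int s + (int n - (int a + int s))) mod int n"
    by (rule mod_add_left_eq)
  also have "\<dots> = int ((b + n - a) mod n)"
    using assms by (simp add: of_nat_diff zmod_int algebra_simps)
  finally show ?thesis
    by simp
qed

lemma add_diff_mod_of_le:
  fixes a b n :: nat
  assumes "a \<le> b" "b < n"
  shows "(b + n - a) mod n = b - a"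
proof -
  have "(b + n - a) mod n = (b - a + n) mod n"
    by (simp only: add_diff_assoc2[OF assms(1)])
  also have "\<dots> = (b - a) mod n"
    by (rule mod_add_self2)
  also have "\<dots> = b - a"
    using assms(2) by (intro mod_less) linarith
  finally show ?thesis .
qed

lemma mod_add_right_cancel_less:
  fixes a b n s :: nat
  assumes "a < n" "b < n" "(a + s) mod n = (b + s) mod n"
  shows "a = b"
proof -
  have zero: "(b + n - a) mod n = 0"
    using cyclic_offset_mod[OF assms(1,2), of s] assms(3) by simp
  have "a \<le> b"
  proof (rule ccontr)
    assume "\<not> a \<le> b"
    then have "0 < b + n - a" "b + n - a < n"
      using assms(1) by linarith+
    then show False
      using zero mod_less[of "b + n - a" n] by linarith
  qed
  then show ?thesis
    using zero add_diff_mod_of_le[OF _ assms(2)] by fastforce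
qed

lemma bij_betw_cyclic_shift:
  assumes "bij_betw h {..<n} V"
  shows "bij_betw (cyclic_shift n s h) {..<n} V"
proof (cases "n = 0")
  case True
  then show ?thesis
    using assms by (simp add: bij_betw_def)
next
  case False
  have inj: "inj_on (cyclic_shift n s h) {..<n}"
  proof (rule inj_onI)
    fix a b
    assume ab: "a \<in> {..<n}" "b \<in> {..<n}" "cyclic_shift n s h a = cyclic_shift n s h b"
    then have "(a + s) mod n = (b + s) mod n"
      using assms False unfolding cyclic_shift_def bij_betw_def inj_on_def by simp
    then show "a = b"
      using mod_add_right_cancel_less ab(1,2) by blast
  qed
  have "cyclic_shift n s h ` {..<n} \<subseteq> V"
    using assms False unfolding cyclic_shift_def bij_betw_def by auto
  moreover have "card (cyclic_shift n s h ` {..<n}) = card V"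
    using card_image[OF inj] bij_betw_same_card[OF assms] by simp
  moreover have "finite V"
    using bij_betw_finite[OF assms] by simp
  ultimately show ?thesis
    using inj card_subset_eq unfolding bij_betw_def by blast
qed

lemma fwd_arc_cyclic_shift:
  fixes s :: nat
  assumes bij: "bij_betw h {..<card V} V" and ab: "a < card V" "b < card V"
  defines "g \<equiv> cyclic_shift (card V) s h"
  shows "fwd_arc V h (g a) (g b) = {g ((a + k) mod card V) | k. k \<le> (b + card V - a) mod card V}"
proof -
  let ?n = "card V"
  have pos: "pos V h (g k) = (k + s) mod ?n" if "k < ?n" for k
    unfolding pos_def g_def cyclic_shift_def
    using that bij_betw_imp_inj_on[OF bij] by (simp add: inv_into_f_f)
  have "((a + s) mod ?n + k) mod ?n = ((a + k) mod ?n + s) mod ?n" for k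
    by (simp only: mod_add_left_eq) (simp add: ac_simps)
  then have "h (((a + s) mod ?n + k) mod ?n) = g ((a + k) mod ?n)" for k
    unfolding g_def cyclic_shift_def by simp
  then show ?thesis
    unfolding fwd_arc_def pos[OF ab(1)] pos[OF ab(2)] cyclic_offset_mod[OF ab] by simp
qed

lemma fwd_arc_cyclic_shift_interval:
  fixes s :: nat
  assumes bij: "bij_betw h {..<card V} V" and ab: "a \<le> b" "b < card V"
  defines "g \<equiv> cyclic_shift (card V) s h"
  shows "fwd_arc V h (g a) (g b) = g ` {a..b}"
proof -
  have "(b + card V - a) mod card V = b - a"
    using ab by (rule add_diff_mod_of_le)
  moreover have "{g ((a + k) mod card V) | k. k \<le> b - a} = g ` {a..b}"
  proof (intro equalityI subsetI)
    fix x
    assume "x \<in> {g ((a + k) mod card V) | k. k \<le> b - a}"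
    then show "x \<in> g ` {a..b}"
      using ab by auto
  next
    fix x
    assume "x \<in> g ` {a..b}"
    then obtain j where "a \<le> j" "j \<le> b" "x = g j"
      by auto
    then show "x \<in> {g ((a + k) mod card V) | k. k \<le> b - a}"
      using ab by (intro CollectI exI[of _ "j - a"]) auto
  qed
  ultimately show ?thesis
    using fwd_arc_cyclic_shift[OF bij le_less_trans[OF ab] ab(2)] unfolding g_def by simp
qed

lemma maximal_outerplanar_non_edge_crossed:
  assumes max: "maximal_outerplanar V E" and bij: "bij_betw g {..<card V} V"
    and cf: "crossing_free (card V) g E"
    and pq: "p < q" "q < card V" "{g p, g q} \<notin> E"
  shows "\<exists>a b. {g a, g b} \<in> E \<and> b < card V \<and>
           (a < p \<and> p < b \<and> b < q \<or> p < a \<and> a < q \<and> q < b)"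
proof -
  let ?n = "card V"
  have inj: "inj_on g {..<?n}"
    using bij by (rule bij_betw_imp_inj_on)
  have pq_V: "g p \<in> V" "g q \<in> V"
    using bij pq by (auto dest: bij_betwE)
  have "g p \<noteq> g q"
    using inj_onD[OF inj, of p q] pq by auto
  have "graph V E"
    using max unfolding maximal_outerplanar_def outerplanar_def by blast
  then have "graph V (insert {g p, g q} E)"
    using pq_V \<open>g p \<noteq> g q\<close> by (auto simp: graph_def)
  moreover have "\<not> outerplanar V (insert {g p, g q} E)"
    using max pq_V \<open>g p \<noteq> g q\<close> pq(3) unfolding maximal_outerplanar_def by blast
  ultimately have "\<not> crossing_free ?n g (insert {g p, g q} E)"
    using bij unfolding outerplanar_def outer_embedding_iff_crossing_free by blast
  then obtain a b c d where abcd: "a < c" "c < b" "b < d" "d < ?n"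
    and ab: "{g a, g b} \<in> insert {g p, g q} E" and cd: "{g c, g d} \<in> insert {g p, g q} E"
    unfolding crossing_free_def by blast
  have same: "x = p \<and> y = q" if xy: "{g x, g y} = {g p, g q}" "x < y" "y < ?n" for x y
  proof -
    have "g x = g p \<and> g y = g q \<or> g x = g q \<and> g y = g p"
      using xy(1) by (simp add: doubleton_eq_iff)
    then have "x = p \<and> y = q \<or> x = q \<and> y = p"
      using inj_onD[OF inj] xy(2,3) pq(1,2) by (metis lessThan_iff order.strict_trans)
    then show ?thesis
      using xy(2) pq(1) by auto
  qed
  show ?thesis
  proof (cases "{g a, g b} \<in> E")
    case True
    then have "{g c, g d} = {g p, g q}"
      using crossing_freeD[OF cf abcd True] cd by blast
    then have "c = p" "d = q"
      using same abcd by auto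
    then show ?thesis
      using True abcd by (intro exI[of _ a] exI[of _ b]) auto
  next
    case False
    then have "a = p" "b = q"
      using ab same abcd by auto
    moreover have "{g c, g d} \<in> E"
    proof (rule ccontr)
      assume "{g c, g d} \<notin> E"
      then have "c = p"
        using cd same[of c d] abcd by auto
      then show False
        using \<open>a = p\<close> abcd(1) by simp
    qed
    ultimately show ?thesis
      using abcd by (intro exI[of _ c] exI[of _ d]) auto
  qed
qed

section \<open>The triangle on a side of a triangulated polygon\<close>

text \<open>
  Vertices are numbered 0, ..., n - 1 along the outer face; apex is the third vertex of the
  triangle on the side joining n - 1 and 0.
\<close>

locale triangulated_polygon =
  fixes V :: "'a set" and E :: "'a set set" and n :: nat and g :: "nat \<Rightarrow> 'a"
  assumes graph: "graph V E"
    and bij: "bij_betw g {..<n} V"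
    and crossing_free: "crossing_free n g E"
    and non_edge_crossed: "\<And>p q. p < q \<Longrightarrow> q < n \<Longrightarrow> {g p, g q} \<notin> E \<Longrightarrow>
          \<exists>a b. {g a, g b} \<in> E \<and> b < n \<and> (a < p \<and> p < b \<and> b < q \<or> p < a \<and> a < q \<and> q < b)"
    and three_le: "3 \<le> n"
begin

lemma inj: "inj_on g {..<n}"
  using bij by (rule bij_betw_imp_inj_on)

lemma in_V: "k < n \<Longrightarrow> g k \<in> V"
  using bij by (auto dest: bij_betwE)

lemma closing_side: "{g 0, g (n - 1)} \<in> E"
proof (rule ccontr)
  assume non_edge: "{g 0, g (n - 1)} \<notin> E"
  have "0 < n - 1" "n - 1 < n"
    using three_le by auto
  from non_edge_crossed[OF this non_edge] obtain a b
    where "b < n" "a < 0 \<and> 0 < b \<and> b < n - 1 \<or> 0 < a \<and> a < n - 1 \<and> n - 1 < b"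
    by blast
  then show False
    by linarith
qed

lemma first_side: "{g 0, g 1} \<in> E"
proof (rule ccontr)
  assume non_edge: "{g 0, g 1} \<notin> E"
  have "0 < (1::nat)" "1 < n"
    using three_le by auto
  from non_edge_crossed[OF this non_edge] obtain a b :: nat
    where "a < 0 \<and> 0 < b \<and> b < 1 \<or> 0 < a \<and> a < 1 \<and> 1 < b"
    by blast
  then show False
    by linarith
qed

definition apex :: nat where
  "apex = Max {j. 0 < j \<and> j < n - 1 \<and> {g 0, g j} \<in> E}"

lemma apex_max: "0 < j \<Longrightarrow> j < n - 1 \<Longrightarrow> {g 0, g j} \<in> E \<Longrightarrow> j \<le> apex"
  unfolding apex_def by (rule Max_ge) (auto intro: finite_subset[of _ "{..<n}"])

lemma apex: "0 < apex" "apex < n - 1" "{g 0, g apex} \<in> E"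
proof -
  let ?N = "{j. 0 < j \<and> j < n - 1 \<and> {g 0, g j} \<in> E}"
  have "finite ?N"
    by (rule finite_subset[of _ "{..<n}"]) auto
  moreover have "1 \<in> ?N"
    using first_side three_le by simp
  ultimately have "apex \<in> ?N"
    unfolding apex_def by (intro Max_in) auto
  then show "0 < apex" "apex < n - 1" "{g 0, g apex} \<in> E"
    by auto
qed

text \<open>
  A chord straddling apex would either join vertex 0 to a vertex beyond apex or cross the
  chord from 0 to apex.
\<close>

lemma chord_position:
  assumes ij: "i < j" "j < n" "{g i, g j} \<in> E"
  shows "apex \<le> i \<or> j \<le> apex \<or> (i = 0 \<and> j = n - 1)"
proof (rule ccontr)
  assume "\<not> ?thesis"
  then have between: "i < apex" "apex < j" "i \<noteq> 0 \<or> j \<noteq> n - 1"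
    by auto
  show False
  proof (cases "i = 0")
    case True
    then show False
      using apex_max[of j] between ij by fastforce
  next
    case False
    then show False
      using crossing_freeD[OF crossing_free, of 0 i apex j] apex between ij by auto
  qed
qed

lemma apex_last_side: "{g (n - 1), g apex} \<in> E"
proof (rule ccontr)
  assume "{g (n - 1), g apex} \<notin> E"
  then have "{g apex, g (n - 1)} \<notin> E"
    by (simp add: insert_commute)
  then obtain a b where ab: "{g a, g b} \<in> E" "b < n" "a < apex" "apex < b" "b < n - 1"
    using non_edge_crossed[of apex "n - 1"] apex(2) by auto
  then show False
    using chord_position[of a b] by auto
qed

lemma common_neighbour_eq_apex:
  assumes last: "{g (n - 1), x} \<in> E" and first: "{g 0, x} \<in> E"
  shows "x = g apex"
proof -
  have "x \<in> V"
    using graph_edge_subset[OF graph first] by blast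
  then obtain k where k: "k < n" "x = g k"
    using bij unfolding bij_betw_def by auto
  have "k \<noteq> 0"
  proof
    assume "k = 0"
    then show False
      using first k graph_no_loop[OF graph, of "g 0"] by simp
  qed
  have "k \<noteq> n - 1"
  proof
    assume "k = n - 1"
    then show False
      using last k graph_no_loop[OF graph, of "g (n - 1)"] by simp
  qed
  have "\<not> k < apex"
  proof
    assume "k < apex"
    then have "{g k, g (n - 1)} \<notin> E"
      using crossing_freeD[OF crossing_free, of 0 k apex "n - 1"] apex \<open>k \<noteq> 0\<close> by simp
    then show False
      using last k by (simp add: insert_commute)
  qed
  moreover have "\<not> apex < k"
  proof
    assume "apex < k"
    then have "{g apex, g (n - 1)} \<notin> E"
      using crossing_freeD[OF crossing_free, of 0 apex k "n - 1"] first k apex \<open>k \<noteq> n - 1\<close>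
      by simp
    then show False
      using apex_last_side by (simp add: insert_commute)
  qed
  ultimately show ?thesis
    using k by simp
qed

lemma Delta_eq_apex: "Delta E (g (n - 1)) (g 0) = g apex"
  unfolding Delta_def
proof (rule the_equality)
  show "{g (n - 1), g apex} \<in> E \<and> {g 0, g apex} \<in> E"
    using apex_last_side apex(3) by simp
qed (use common_neighbour_eq_apex in blast)

lemma edge_split:
  assumes "e \<in> E"
  shows "e \<subseteq> g ` {apex..n - 1} \<or> e \<subseteq> g ` {0..apex} \<or> e = {g (n - 1), g 0}"
proof -
  obtain x y where xy: "x \<noteq> y" "e = {x, y}" "x \<in> V" "y \<in> V"
    using assms graph unfolding graph_def by blast
  obtain i j where ij: "i < n" "x = g i" "j < n" "y = g j"
    using xy(3,4) bij unfolding bij_betw_def by blast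
  then consider "i < j" | "j < i"
    using xy(1) by fastforce
  then show ?thesis
  proof cases
    case 1
    then show ?thesis
      using chord_position[of i j] assms xy(2) ij by auto
  next
    case 2
    then show ?thesis
      using chord_position[of j i] assms xy(2) ij by (auto simp: insert_commute)
  qed
qed

lemma triangle_separation:
  "triangle_separation V E (g ` {apex..n - 1}) (g ` {0..apex}) (g (n - 1)) (g 0) (g apex)"
proof
  show "g ` {apex..n - 1} \<subseteq> V" "g ` {0..apex} \<subseteq> V"
    using in_V apex three_le by auto
  have "g ` {apex..n - 1} \<inter> g ` {0..apex} = g ` ({apex..n - 1} \<inter> {0..apex})"
    using inj three_le apex(2) by (intro inj_on_image_Int[symmetric]) (auto elim: inj_on_subset)
  also have "{apex..n - 1} \<inter> {0..apex} = {apex}"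
    using apex by auto
  finally show "g ` {apex..n - 1} \<inter> g ` {0..apex} = {g apex}"
    by simp
  show "g (n - 1) \<in> g ` {apex..n - 1}" "g 0 \<in> g ` {0..apex}"
    using apex by auto
  show "{g (n - 1), g apex} \<in> E" "{g 0, g apex} \<in> E"
    using apex_last_side apex by auto
  show "{g (n - 1), g 0} \<in> E"
    using closing_side by (simp add: insert_commute)
  show "\<And>e. e \<in> E \<Longrightarrow> e \<subseteq> g ` {apex..n - 1} \<or> e \<subseteq> g ` {0..apex} \<or> e = {g (n - 1), g 0}"
    by (rule edge_split)
qed (rule graph)

end

section \<open>Segments at an outer edge\<close>

lemma triangulated_polygon_cyclic_shift:
  assumes max: "maximal_outerplanar V E" and emb: "outer_embedding V E f" and "3 \<le> card V"
  shows "triangulated_polygon V E (card V) (cyclic_shift (card V) s f)"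
proof -
  have f: "bij_betw f {..<card V} V" "crossing_free (card V) f E"
    using emb unfolding outer_embedding_iff_crossing_free by auto
  show ?thesis
  proof
    show "graph V E"
      using max unfolding maximal_outerplanar_def outerplanar_def by blast
    show "bij_betw (cyclic_shift (card V) s f) {..<card V} V"
      using bij_betw_cyclic_shift[OF f(1)] .
    show "crossing_free (card V) (cyclic_shift (card V) s f) E"
      using crossing_free_cyclic_shift[OF f(2)] .
  qed (use maximal_outerplanar_non_edge_crossed[OF max bij_betw_cyclic_shift[OF f(1)]
             crossing_free_cyclic_shift[OF f(2)]] assms(3) in auto)
qed

lemma mvc_segments_oriented:
  assumes max: "maximal_outerplanar V E" and emb: "outer_embedding V E f" and three: "3 \<le> card V"
    and i: "i < card V" and u: "u = f i" and v: "v = f (Suc i mod card V)"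
    and tight: "mvc V E {} + 1 =
      mvc (seg_V V E f u v) (seg_E V E f u v) {} + mvc (seg_V V E f v u) (seg_E V E f v u) {}"
  shows "mvc V E {u} + 1 = mvc (seg_V V E f u v) (seg_E V E f u v) {u, Delta E u v}
           + mvc (seg_V V E f v u) (seg_E V E f v u) {}"
    and "mvc V E {v} + 1 = mvc (seg_V V E f u v) (seg_E V E f u v) {}
           + mvc (seg_V V E f v u) (seg_E V E f v u) {v, Delta E u v}"
    and "mvc V E {u, v} + 1 = mvc (seg_V V E f u v) (seg_E V E f u v) {u, Delta E u v}
           + mvc (seg_V V E f v u) (seg_E V E f v u) {v, Delta E u v}"
proof -
  let ?n = "card V"
  define g where "g = cyclic_shift ?n (Suc i mod ?n) f"
  interpret triangulated_polygon V E ?n g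
    unfolding g_def by (rule triangulated_polygon_cyclic_shift[OF max emb three])
  have f: "bij_betw f {..<?n} V"
    using emb unfolding outer_embedding_iff_crossing_free by auto
  have g0: "g 0 = v"
    unfolding g_def cyclic_shift_def v by simp
  have "(?n - 1 + Suc i mod ?n) mod ?n = (?n - 1 + Suc i) mod ?n"
    by (rule mod_add_right_eq)
  also have "?n - 1 + Suc i = i + ?n"
    using three by simp
  finally have "(?n - 1 + Suc i mod ?n) mod ?n = i"
    using i by simp
  then have gl: "g (?n - 1) = u"
    unfolding g_def cyclic_shift_def u by simp
  have w: "Delta E u v = g apex" "Delta E v u = g apex"
    using Delta_eq_apex g0 gl unfolding Delta_def by (simp_all add: conj_commute)
  have arc_wu: "fwd_arc V f (g apex) (g (?n - 1)) = g ` {apex..?n - 1}"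
    using fwd_arc_cyclic_shift_interval[OF f, where s = "Suc i mod ?n", folded g_def] apex
    by simp
  have arc_vw: "fwd_arc V f (g 0) (g apex) = g ` {0..apex}"
    using fwd_arc_cyclic_shift_interval[OF f, where s = "Suc i mod ?n", folded g_def] apex
    by simp
  have arc_uw: "fwd_arc V f (g (?n - 1)) (g apex)
      = {g ((?n - 1 + k) mod ?n) | k. k \<le> (apex + ?n - (?n - 1)) mod ?n}"
    using fwd_arc_cyclic_shift[OF f, where s = "Suc i mod ?n", folded g_def] apex three
    by simp
  \<comment> \<open>going forward from u, the first step reaches v\<close>
  have "apex + ?n - (?n - 1) = Suc apex" "Suc apex < ?n" "(?n - 1 + 1) mod ?n = 0"
    using apex three by auto
  then have "v \<in> fwd_arc V f u (g apex)"
    unfolding arc_uw gl[symmetric] g0[symmetric] by (intro CollectI exI[of _ 1]) simp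
  then have seg_u: "seg_V V E f u v = g ` {apex..?n - 1}"
    unfolding seg_V_def arc_avoiding_def w(1) using arc_wu gl by simp
  have "u \<notin> g ` {0..apex}"
    using inj_onD[OF inj] apex gl by fastforce
  then have seg_v: "seg_V V E f v u = g ` {0..apex}"
    unfolding seg_V_def arc_avoiding_def w(2) using arc_vw g0 by simp
  interpret triangle_separation V E "g ` {apex..?n - 1}" "g ` {0..apex}" u v "g apex"
    using triangle_separation unfolding g0 gl .
  show "mvc V E {u} + 1 = mvc (seg_V V E f u v) (seg_E V E f u v) {u, Delta E u v}
           + mvc (seg_V V E f v u) (seg_E V E f v u) {}"
    and "mvc V E {v} + 1 = mvc (seg_V V E f u v) (seg_E V E f u v) {}
           + mvc (seg_V V E f v u) (seg_E V E f v u) {v, Delta E u v}"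
    and "mvc V E {u, v} + 1 = mvc (seg_V V E f u v) (seg_E V E f u v) {u, Delta E u v}
           + mvc (seg_V V E f v u) (seg_E V E f v u) {v, Delta E u v}"
    using mvc_containing_triangle_side tight unfolding seg_E_def seg_u seg_v w by auto
qed

theorem lemma2:
  fixes V :: "'a set" and E :: "'a set set" and f :: "nat \<Rightarrow> 'a" and u v :: 'a
  assumes "maximal_outerplanar V E"
    and "outer_embedding V E f"
    and "card V \<ge> 4"
    and "outer_edge V E f u v"
    and "deg V E u > 2" and "deg V E v > 2"
    and "int (mvc V E {}) =
           int (mvc (seg_V V E f u v) (seg_E V E f u v) {})
         + int (mvc (seg_V V E f v u) (seg_E V E f v u) {}) - 1"
  shows "int (mvc V E {u}) =
           int (mvc (seg_V V E f u v) (seg_E V E f u v) {u, Delta E u v})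
         + int (mvc (seg_V V E f v u) (seg_E V E f v u) {}) - 1 \<and>
         int (mvc V E {v}) =
           int (mvc (seg_V V E f u v) (seg_E V E f u v) {})
         + int (mvc (seg_V V E f v u) (seg_E V E f v u) {v, Delta E u v}) - 1 \<and>
         int (mvc V E {u, v}) =
           int (mvc (seg_V V E f u v) (seg_E V E f u v) {u, Delta E u v})
         + int (mvc (seg_V V E f v u) (seg_E V E f v u) {v, Delta E u v}) - 1"
proof -
  obtain i where i: "i < card V" and uv: "{u, v} = {f i, f (Suc i mod card V)}"
    using assms(4) unfolding outer_edge_def by blast
  have three: "3 \<le> card V"
    using assms(3) by simp
  have Delta_comm: "Delta E v u = Delta E u v"
    unfolding Delta_def by (simp add: conj_commute)
  from uv consider "u = f i" "v = f (Suc i mod card V)" | "v = f i" "u = f (Suc i mod card V)"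
    by (auto simp: doubleton_eq_iff)
  then show ?thesis
  proof cases
    case 1
    show ?thesis
      using mvc_segments_oriented[OF assms(1,2) three i 1] assms(7) by linarith
  next
    case 2
    show ?thesis
      using mvc_segments_oriented[OF assms(1,2) three i 2] assms(7)
      unfolding Delta_comm by (simp add: insert_commute)
  qed
qed

end
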